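(* Let $f\in\mathbb{Q}[x_1,\dots,x_n]$ be a convex polynomial and $P=\{x\in\mathbb{R}^n:Ax\le b\}$ a nonempty polyhedron ($A\in\mathbb{Q}^{m\times n}$, $b\in\mathbb{Q}^m$). Suppose $\mathcal{U}\subseteq\mathbb{R}^n$ is a linear subspace, $U\in\mathbb{Q}^{k\times n}$ has pairwise orthogonal rows spanning $\mathcal{U}$, $w\in\mathcal{U}^\perp$ is a rational vector, and $q\in\mathbb{Q}[y_1,\dots,y_k]$ is a strongly convex quadratic polynomial, such that $f(x)=f(x_{\mathcal{U}})-\langle w,x\rangle$ and $f(x_{\mathcal{U}})\ge q(Ux)$ for all $x\in\mathbb{R}^n$. Then $f$ is unbounded from below on $P$ if and only if there exists $x^0\in\mathbb{R}^n$ with $Ax^0\le0$, $Ux^0=0$ (equivalently $x^0\in\mathcal{U}^\perp$) and $\langle w,x^0\rangle=1$.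
   Context: $x_{\mathcal{U}}$ denotes the orthogonal projection of $x$ onto $\mathcal{U}$. A quadratic $q$ is strongly convex if its (constant) Hessian is positive definite. Such $\mathcal{U},U,w,q$ always exist for convex rational $f$. *)

theory Defs
  imports "HOL-Analysis.Analysis"
begin

definition rat_poly_fun :: "(real^'n \<Rightarrow> real) \<Rightarrow> bool" where
  "rat_poly_fun f \<longleftrightarrow>
     (\<exists>c :: ('n \<Rightarrow> nat) \<Rightarrow> real.
        finite {\<alpha>. c \<alpha> \<noteq> 0} \<and> (\<forall>\<alpha>. c \<alpha> \<in> \<rat>) \<and>
        (\<forall>x. f x = (\<Sum>\<alpha>\<in>{\<alpha>. c \<alpha> \<noteq> 0}. c \<alpha> * (\<Prod>i\<in>UNIV. (x $ i) ^ (\<alpha> i)))))"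

text \<open>Strongly convex quadratic polynomial with rational coefficients:
  q y = y^T Q y + c.y + d, Q symmetric rational; its (constant) Hessian 2Q is positive definite.\<close>
definition strongly_convex_rat_quadratic :: "(real^'k \<Rightarrow> real) \<Rightarrow> bool" where
  "strongly_convex_rat_quadratic q \<longleftrightarrow>
     (\<exists>(Q :: real^'k^'k) (c :: real^'k) (d :: real).
        (\<forall>i j. Q $ i $ j \<in> \<rat>) \<and> (\<forall>i. c $ i \<in> \<rat>) \<and> d \<in> \<rat> \<and>
        transpose Q = Q \<and>
        (\<forall>y. y \<noteq> 0 \<longrightarrow> y \<bullet> ((2 *\<^sub>R Q) *v y) > 0) \<and>
        (\<forall>y. q y = y \<bullet> (Q *v y) + c \<bullet> y + d))"

definition orth_proj :: "(real^'n) set \<Rightarrow> real^'n \<Rightarrow> real^'n" where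
  "orth_proj S x = (THE y. y \<in> S \<and> (\<forall>u\<in>S. orthogonal (x - y) u))"

end

theory Submission
  imports Defs
begin

text \<open>If the polyhedron \<open>P\<close> has a recession direction \<open>x\<^sub>0\<close> with \<open>U x\<^sub>0 = 0\<close> and
  \<open>\<langle>w, x\<^sub>0\<rangle> = 1\<close>, then \<open>x\<^sub>0 \<perp> \<U>\<close>, so moving from a point of \<open>P\<close> along \<open>x\<^sub>0\<close> leaves the
  projection onto \<open>\<U>\<close> fixed while \<open>\<langle>w, x\<rangle>\<close> grows linearly, and \<open>f\<close> decreases without
  bound. Otherwise Farkas' lemma puts \<open>w\<close> into the cone generated by the rows of \<open>A\<close> and
  the rows of \<open>\<plusminus>U\<close>, which bounds \<open>\<langle>w, x\<rangle>\<close> on \<open>P\<close> by a constant plus \<open>\<langle>\<mu>, U x\<rangle>\<close>.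
  Since a strongly convex quadratic minus a linear function is bounded below,
  \<open>f x \<ge> q (U x) - \<langle>w, x\<rangle>\<close> is then bounded below on \<open>P\<close>.\<close>

lemma orth_proj_eqI:
  assumes "subspace S" "y \<in> S" "\<forall>u\<in>S. orthogonal (x - y) u"
  shows "orth_proj S x = y"
  unfolding orth_proj_def
proof (rule the_equality)
  show "y \<in> S \<and> (\<forall>u\<in>S. orthogonal (x - y) u)"
    using assms by blast
next
  fix y' assume y': "y' \<in> S \<and> (\<forall>u\<in>S. orthogonal (x - y') u)"
  then have "y' - y \<in> S"
    using assms subspace_diff by blast
  then have "orthogonal (x - y) (y' - y)" "orthogonal (x - y') (y' - y)"
    using assms y' by blast+
  then have "(y' - y) \<bullet> (y' - y) = 0"
    unfolding orthogonal_def by (simp add: algebra_simps)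
  then show "y' = y" by simp
qed

lemma orth_proj_add_orthogonal:
  assumes "subspace S" "\<forall>u\<in>S. orthogonal v u"
  shows "orth_proj S (x + v) = orth_proj S x"
proof -
  obtain y z where y: "y \<in> S" and z: "\<forall>u\<in>S. orthogonal z u" and "x = y + z"
    using orthogonal_subspace_decomp_exists[of S x] span_eq_iff assms(1) by metis
  then have "orth_proj S x = y" "orth_proj S (x + v) = y"
    using assms by (auto intro!: orth_proj_eqI simp: orthogonal_clauses)
  then show ?thesis by simp
qed

lemma farkas_convex_cone_hull:
  fixes S :: "'a::euclidean_space set"
  assumes "finite S" "w \<notin> convex_cone hull S"
  obtains a where "a \<bullet> w < 0" "\<forall>s\<in>S. 0 \<le> a \<bullet> s"
proof -
  let ?K = "convex_cone hull S"
  obtain a \<beta> where a: "a \<bullet> w < \<beta>" and \<beta>: "\<forall>k\<in>?K. \<beta> < a \<bullet> k"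
    using separating_hyperplane_closed_point[OF convex_convex_cone_hull
        closed_convex_cone_hull[OF assms(1)] assms(2)] by blast
  have "\<beta> < 0"
    using \<beta> convex_cone_hull_contains_0 by fastforce
  have "0 \<le> a \<bullet> k" if "k \<in> ?K" for k
  proof (rule ccontr)
    assume neg: "\<not> 0 \<le> a \<bullet> k"
    then have "0 < \<beta> / (a \<bullet> k)"
      using \<open>\<beta> < 0\<close> by (simp add: divide_neg_neg)
    then have "(\<beta> / (a \<bullet> k)) *\<^sub>R k \<in> ?K"
      using that by (intro convex_cone_hull_mul) auto
    then have "\<beta> < a \<bullet> ((\<beta> / (a \<bullet> k)) *\<^sub>R k)"
      using \<beta> by blast
    then show False
      using neg by simp
  qed
  moreover have "a \<bullet> w < 0"
    using a \<open>\<beta> < 0\<close> by linarith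
  ultimately show ?thesis
    using that hull_subset[of S convex_cone] by blast
qed

lemma convex_cone_upper_bounded_modulo:
  fixes h :: "'a::real_inner \<Rightarrow> 'b::real_inner"
  shows "convex_cone {v. \<exists>\<mu> C. \<forall>x\<in>X. v \<bullet> x \<le> C + \<mu> \<bullet> h x}"
  unfolding convex_cone_iff
proof (intro conjI ballI allI impI)
  show "0 \<in> {v. \<exists>\<mu> C. \<forall>x\<in>X. v \<bullet> x \<le> C + \<mu> \<bullet> h x}"
    by (auto intro!: exI[of _ 0])
next
  fix v v' assume "v \<in> {v. \<exists>\<mu> C. \<forall>x\<in>X. v \<bullet> x \<le> C + \<mu> \<bullet> h x}"
    "v' \<in> {v. \<exists>\<mu> C. \<forall>x\<in>X. v \<bullet> x \<le> C + \<mu> \<bullet> h x}"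
  then obtain \<mu> C \<mu>' C' where "\<forall>x\<in>X. v \<bullet> x \<le> C + \<mu> \<bullet> h x"
    "\<forall>x\<in>X. v' \<bullet> x \<le> C' + \<mu>' \<bullet> h x" by blast
  then have "\<forall>x\<in>X. v \<bullet> x + v' \<bullet> x \<le> (C + \<mu> \<bullet> h x) + (C' + \<mu>' \<bullet> h x)"
    using add_mono by blast
  then have "\<forall>x\<in>X. (v + v') \<bullet> x \<le> (C + C') + (\<mu> + \<mu>') \<bullet> h x"
    by (simp add: inner_add_left algebra_simps)
  then show "v + v' \<in> {v. \<exists>\<mu> C. \<forall>x\<in>X. v \<bullet> x \<le> C + \<mu> \<bullet> h x}" by blast
next
  fix v and c :: real assume "v \<in> {v. \<exists>\<mu> C. \<forall>x\<in>X. v \<bullet> x \<le> C + \<mu> \<bullet> h x}" "0 \<le> c"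
  then obtain \<mu> C where "\<forall>x\<in>X. v \<bullet> x \<le> C + \<mu> \<bullet> h x" by blast
  then have "\<forall>x\<in>X. (c *\<^sub>R v) \<bullet> x \<le> c * C + (c *\<^sub>R \<mu>) \<bullet> h x"
    using \<open>0 \<le> c\<close> by (simp add: distrib_left[symmetric] mult_left_mono)
  then show "c *\<^sub>R v \<in> {v. \<exists>\<mu> C. \<forall>x\<in>X. v \<bullet> x \<le> C + \<mu> \<bullet> h x}" by blast
qed

lemma polyhedron_linear_bound_modulo_rows:
  fixes A :: "real^'n^'m" and U :: "real^'n^'k"
  assumes "\<nexists>x0. (\<forall>i. (A *v x0) $ i \<le> 0) \<and> U *v x0 = 0 \<and> w \<bullet> x0 = 1"
  obtains \<mu> C where "\<forall>x\<in>{x. \<forall>i. (A *v x) $ i \<le> b $ i}. w \<bullet> x \<le> C + \<mu> \<bullet> (U *v x)"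
proof -
  let ?P = "{x. \<forall>i. (A *v x) $ i \<le> b $ i}"
  define S where "S = range (($) A) \<union> range (($) U) \<union> range (\<lambda>j. - U $ j)"
  have "finite S"
    unfolding S_def by simp
  define D where "D = {v. \<exists>\<mu> C. \<forall>x\<in>?P. v \<bullet> x \<le> C + \<mu> \<bullet> (U *v x)}"
  have "w \<in> convex_cone hull S"
  proof (rule ccontr)
    assume "w \<notin> convex_cone hull S"
    with \<open>finite S\<close> obtain a where aw: "a \<bullet> w < 0" and aS: "\<forall>s\<in>S. 0 \<le> a \<bullet> s"
      by (rule farkas_convex_cone_hull)
    define x0 where "x0 = inverse (a \<bullet> w) *\<^sub>R a"
    have "(A *v x0) $ i \<le> 0" for i
    proof -
      have "0 \<le> a \<bullet> A $ i"
        using aS unfolding S_def by simp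
      moreover have "inverse (a \<bullet> w) < 0"
        using aw by simp
      ultimately show ?thesis
        by (simp add: x0_def matrix_vector_mul_component inner_commute mult_nonpos_nonneg)
    qed
    moreover have "U *v x0 = 0"
    proof -
      have "a \<bullet> U $ j = 0" for j
      proof -
        have "U $ j \<in> S" "- U $ j \<in> S"
          unfolding S_def by auto
        then have "0 \<le> a \<bullet> U $ j" "0 \<le> a \<bullet> (- U $ j)"
          using aS by blast+
        then show ?thesis
          by simp
      qed
      then show ?thesis
        by (simp add: x0_def vec_eq_iff matrix_vector_mul_component inner_commute)
    qed
    moreover have "w \<bullet> x0 = 1"
      using aw by (simp add: x0_def inner_commute)
    ultimately show False
      using assms by blast
  qed
  moreover have "convex_cone hull S \<subseteq> D"
  proof (rule hull_minimal)
    show "convex_cone D"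
      unfolding D_def by (rule convex_cone_upper_bounded_modulo)
    have "A $ i \<in> D" for i
      unfolding D_def by (force simp: matrix_vector_mul_component intro!: exI[of _ 0] exI[of _ "b $ i"])
    moreover have "U $ j \<in> D" "- U $ j \<in> D" for j
    proof -
      have "U $ j \<bullet> x = axis j 1 \<bullet> (U *v x)" for x
        by (simp add: matrix_vector_mul_component inner_axis')
      then have "\<forall>x\<in>?P. U $ j \<bullet> x \<le> 0 + axis j 1 \<bullet> (U *v x)"
        "\<forall>x\<in>?P. (- U $ j) \<bullet> x \<le> 0 + (- axis j 1) \<bullet> (U *v x)"
        by simp_all
      then show "U $ j \<in> D" "- U $ j \<in> D"
        unfolding D_def by blast+
    qed
    ultimately show "S \<subseteq> D"
      unfolding S_def by auto
  qed
  ultimately show ?thesis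
    using that unfolding D_def by blast
qed

lemma pos_def_quadratic_form_coercive:
  fixes Q :: "real^'k^'k"
  assumes pos_def: "\<forall>y. y \<noteq> 0 \<longrightarrow> 0 < y \<bullet> (Q *v y)"
  obtains e where "0 < e" "\<forall>y. e * (norm y)\<^sup>2 \<le> y \<bullet> (Q *v y)"
proof -
  let ?h = "\<lambda>y::real^'k. y \<bullet> (Q *v y)"
  have "continuous_on (sphere 0 1) ?h"
    by (intro continuous_intros continuous_on_compose2[OF matrix_vector_mult_linear_continuous_on]) auto
  moreover have "sphere (0::real^'k) 1 \<noteq> {}"
    using vector_choose_size[of 1] by auto
  ultimately obtain y0 where y0: "y0 \<in> sphere 0 1" "\<forall>y\<in>sphere 0 1. ?h y0 \<le> ?h y"
    using continuous_attains_inf[OF compact_sphere] by blast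
  have "y0 \<noteq> 0"
    using y0(1) by auto
  then have "0 < ?h y0"
    using pos_def by blast
  moreover have "?h y0 * (norm y)\<^sup>2 \<le> ?h y" for y
  proof (cases "y = 0")
    case False
    then have "inverse (norm y) *\<^sub>R y \<in> sphere 0 1"
      by simp
    then have "?h y0 \<le> ?h (inverse (norm y) *\<^sub>R y)"
      using y0(2) by blast
    also have "\<dots> = ?h y / (norm y)\<^sup>2"
      by (simp add: matrix_vector_mult_scaleR power2_eq_square divide_inverse)
    finally show ?thesis
      using False by (simp add: pos_le_divide_eq)
  qed simp
  ultimately show ?thesis
    using that by blast
qed

lemma quadratic_real_lower_bound:
  fixes e a r :: real
  assumes "0 < e"
  shows "- (a\<^sup>2 / (4 * e)) \<le> e * r\<^sup>2 - a * r"
proof -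
  have "0 \<le> (2 * e * r - a)\<^sup>2 / (4 * e)"
    using assms by simp
  also have "\<dots> = e * r\<^sup>2 - a * r + a\<^sup>2 / (4 * e)"
    using assms by (simp add: field_simps power2_eq_square)
  finally show ?thesis
    by simp
qed

lemma strongly_convex_rat_quadratic_minus_linear_bounded_below:
  assumes "strongly_convex_rat_quadratic q"
  shows "\<exists>m. \<forall>y. m \<le> q y - \<mu> \<bullet> y"
proof -
  obtain Q c d where pos_def: "\<forall>y. y \<noteq> 0 \<longrightarrow> 0 < y \<bullet> ((2 *\<^sub>R Q) *v y)"
    and q_eq: "\<forall>y. q y = y \<bullet> (Q *v y) + c \<bullet> y + d"
    using assms unfolding strongly_convex_rat_quadratic_def by blast
  have "\<forall>y. y \<noteq> 0 \<longrightarrow> 0 < y \<bullet> (Q *v y)"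
    using pos_def by (simp add: scaleR_matrix_vector_assoc[symmetric])
  then obtain e where "0 < e" and coercive: "\<forall>y. e * (norm y)\<^sup>2 \<le> y \<bullet> (Q *v y)"
    by (rule pos_def_quadratic_form_coercive)
  define a where "a = norm (c - \<mu>)"
  have "d - a\<^sup>2 / (4 * e) \<le> q y - \<mu> \<bullet> y" for y
  proof -
    have "- (a * norm y) \<le> (c - \<mu>) \<bullet> y"
      unfolding a_def using Cauchy_Schwarz_ineq2[of "c - \<mu>" y] by linarith
    then have "d - a\<^sup>2 / (4 * e) \<le> y \<bullet> (Q *v y) + (c - \<mu>) \<bullet> y + d"
      using quadratic_real_lower_bound[OF \<open>0 < e\<close>, of a "norm y"] coercive[rule_format, of y]
      by linarith
    then show ?thesis
      using q_eq by (simp add: inner_diff_left)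
  qed
  then show ?thesis
    by blast
qed

lemma polyhedron_add_recession_direction:
  fixes A :: "real^'n^'m"
  assumes "p \<in> {x. \<forall>i. (A *v x) $ i \<le> b $ i}" "\<forall>i. (A *v d) $ i \<le> 0" "0 \<le> t"
  shows "p + t *\<^sub>R d \<in> {x. \<forall>i. (A *v x) $ i \<le> b $ i}"
proof (intro CollectI allI)
  fix i
  have "(A *v (p + t *\<^sub>R d)) $ i = (A *v p) $ i + t * (A *v d) $ i"
    by (simp add: matrix_vector_right_distrib matrix_vector_mult_scaleR)
  moreover have "t * (A *v d) $ i \<le> 0"
    using assms(2,3) by (simp add: mult_nonneg_nonpos)
  moreover have "(A *v p) $ i \<le> b $ i"
    using assms(1) by simp
  ultimately show "(A *v (p + t *\<^sub>R d)) $ i \<le> b $ i"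
    by linarith
qed

lemma polyhedron_unbounded_below_along_ray:
  fixes A :: "real^'n^'m" and f :: "real^'n \<Rightarrow> real"
  assumes "p \<in> {x. \<forall>i. (A *v x) $ i \<le> b $ i}" "\<forall>i. (A *v d) $ i \<le> 0"
    and "\<And>t. f (p + t *\<^sub>R d) = c - t"
  shows "\<not> (\<exists>B. \<forall>x\<in>{x. \<forall>i. (A *v x) $ i \<le> b $ i}. B \<le> f x)"
proof
  assume "\<exists>B. \<forall>x\<in>{x. \<forall>i. (A *v x) $ i \<le> b $ i}. B \<le> f x"
  then obtain B where "\<forall>x\<in>{x. \<forall>i. (A *v x) $ i \<le> b $ i}. B \<le> f x"
    by blast
  then have "B \<le> c - t" if "0 \<le> t" for t
    using polyhedron_add_recession_direction[OF assms(1,2) that] assms(3) by metis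
  from this[of "max 0 (c - B + 1)"] show False
    by linarith
qed

theorem lemma5p1:
  fixes f :: "real^'n \<Rightarrow> real"
    and A :: "real^'n^'m" and b :: "real^'m"
    and \<U> :: "(real^'n) set" and U :: "real^'n^'k" and w :: "real^'n"
    and q :: "real^'k \<Rightarrow> real"
  assumes f_poly: "rat_poly_fun f"
    and f_convex: "convex_on UNIV f"
    and A_rat: "\<forall>i j. A $ i $ j \<in> \<rat>"
    and b_rat: "\<forall>i. b $ i \<in> \<rat>"
    and P_nonempty: "{x. \<forall>i. (A *v x) $ i \<le> b $ i} \<noteq> {}"
    and U_subspace: "subspace \<U>"
    and U_rat: "\<forall>i j. U $ i $ j \<in> \<rat>"
    and U_orth: "\<forall>i j. i \<noteq> j \<longrightarrow> orthogonal (row i U) (row j U)"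
    and U_span: "span (rows U) = \<U>"
    and w_perp: "\<forall>u\<in>\<U>. orthogonal w u"
    and w_rat: "\<forall>i. w $ i \<in> \<rat>"
    and q_quad: "strongly_convex_rat_quadratic q"
    and f_decomp: "\<forall>x. f x = f (orth_proj \<U> x) - w \<bullet> x"
    and f_lower: "\<forall>x. f (orth_proj \<U> x) \<ge> q (U *v x)"
  shows "(\<not> (\<exists>B. \<forall>x\<in>{x. \<forall>i. (A *v x) $ i \<le> b $ i}. B \<le> f x)) \<longleftrightarrow>
         (\<exists>x0. (\<forall>i. (A *v x0) $ i \<le> 0) \<and> U *v x0 = 0 \<and> w \<bullet> x0 = 1)"
proof
  let ?P = "{x. \<forall>i. (A *v x) $ i \<le> b $ i}"
  assume unbounded: "\<not> (\<exists>B. \<forall>x\<in>?P. B \<le> f x)"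
  show "\<exists>x0. (\<forall>i. (A *v x0) $ i \<le> 0) \<and> U *v x0 = 0 \<and> w \<bullet> x0 = 1"
  proof (rule ccontr)
    assume "\<nexists>x0. (\<forall>i. (A *v x0) $ i \<le> 0) \<and> U *v x0 = 0 \<and> w \<bullet> x0 = 1"
    then obtain \<mu> C where w_bound: "\<forall>x\<in>?P. w \<bullet> x \<le> C + \<mu> \<bullet> (U *v x)"
      by (rule polyhedron_linear_bound_modulo_rows)
    obtain m where m: "\<forall>y. m \<le> q y - \<mu> \<bullet> y"
      using strongly_convex_rat_quadratic_minus_linear_bounded_below[OF q_quad] by blast
    have "m - C \<le> f x" if "x \<in> ?P" for x
      using w_bound[rule_format, OF that] m[rule_format, of "U *v x"]
        f_decomp[rule_format, of x] f_lower[rule_format, of x]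
      by linarith
    with unbounded show False
      by blast
  qed
next
  let ?P = "{x. \<forall>i. (A *v x) $ i \<le> b $ i}"
  assume "\<exists>x0. (\<forall>i. (A *v x0) $ i \<le> 0) \<and> U *v x0 = 0 \<and> w \<bullet> x0 = 1"
  then obtain x0 where A_x0: "\<forall>i. (A *v x0) $ i \<le> 0" and "U *v x0 = 0" and w_x0: "w \<bullet> x0 = 1"
    by blast
  obtain p where p: "p \<in> ?P"
    using P_nonempty by blast
  have "\<forall>u\<in>\<U>. orthogonal x0 u"
    using orthogonal_nullspace_rowspace[OF \<open>U *v x0 = 0\<close>] unfolding U_span by blast
  then have "\<forall>u\<in>\<U>. orthogonal (t *\<^sub>R x0) u" for t
    by (simp add: orthogonal_clauses(7))
  then have "orth_proj \<U> (p + t *\<^sub>R x0) = orth_proj \<U> p" for t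
    using orth_proj_add_orthogonal[OF U_subspace] by blast
  then have "f (p + t *\<^sub>R x0) = f (orth_proj \<U> p) - w \<bullet> p - t" for t
    using f_decomp[rule_format, of "p + t *\<^sub>R x0"] w_x0 by (simp add: inner_add_right)
  with p A_x0 show "\<not> (\<exists>B. \<forall>x\<in>?P. B \<le> f x)"
    by (rule polyhedron_unbounded_below_along_ray)
qed

end
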